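(* Let $L \ge N$ be positive integers, let $\mathbf{T} \in \mathbb{R}^{L\times N}$ have full rank $N$, and let $\gamma>0$. Equip $\mathbb{R}^N$ with the scalar product $\langle \mathbf{x},\mathbf{y}\rangle_{\mathbf{T}} := \mathbf{x}^{T}\mathbf{T}^{*}\mathbf{T}\mathbf{y}$ and norm $\|\mathbf{x}\|_{\mathbf{T}} := \|\mathbf{T}\mathbf{x}\|_2$. Then the operator $\mathbf{T}^{\dagger} S_\gamma \mathbf{T}:\mathbb{R}^N\to\mathbb{R}^N$ is the proximity operator, with respect to this scalar product, of a proper, lower semi-continuous, convex function $\Phi:\mathbb{R}^N\to\mathbb{R}\cup\{+\infty\}$; that is, for every $\mathbf{z}\in\mathbb{R}^N$, $$\mathbf{T}^{\dagger} S_\gamma (\mathbf{T}\mathbf{z}) = \operatorname*{argmin}_{\mathbf{x}\in\mathbb{R}^N}\Big\{\tfrac12\|\mathbf{z}-\mathbf{x}\|_{\mathbf{T}}^2 + \Phi(\mathbf{x})\Big\}.$$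
   Context: $\mathbf{T}^{*}$ denotes the transpose of $\mathbf{T}$ and $\mathbf{T}^{\dagger} = (\mathbf{T}^{*}\mathbf{T})^{-1}\mathbf{T}^{*}$ its Moore–Penrose inverse. $S_\gamma:\mathbb{R}^L\to\mathbb{R}^L$ is the componentwise soft shrinkage operator: $[S_\gamma(\mathbf{y})]_j = y_j-\gamma$ if $y_j\ge\gamma$, $y_j+\gamma$ if $y_j\le-\gamma$, and $0$ if $|y_j|<\gamma$. Equivalently, the conclusion says: $\mathbf{x}=\mathbf{T}^{\dagger}S_\gamma\mathbf{T}\mathbf{z}$ if and only if $\mathbf{z}-\mathbf{x}$ lies in the subdifferential of $\Phi$ at $\mathbf{x}$ taken with respect to $\langle\cdot,\cdot\rangle_{\mathbf{T}}$, i.e. $\langle \mathbf{z}-\mathbf{x}, \tilde{\mathbf{x}}-\mathbf{x}\rangle_{\mathbf{T}} \le \Phi(\tilde{\mathbf{x}})-\Phi(\mathbf{x})$ for all $\tilde{\mathbf{x}}$. *)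

theory Defs
  imports "HOL-Analysis.Analysis" "HOL-Library.Extended_Real"
begin

definition soft_shrink :: "real \<Rightarrow> real^'l \<Rightarrow> real^'l" where
  "soft_shrink \<gamma> y = (\<chi> j. if y $ j \<ge> \<gamma> then y $ j - \<gamma>
                          else if y $ j \<le> - \<gamma> then y $ j + \<gamma> else 0)"

text \<open>Moore--Penrose inverse of a full column rank matrix: (T^* T)^{-1} T^*.\<close>
definition pinv :: "real^'n^'l \<Rightarrow> real^'l^'n" where
  "pinv T = matrix_inv (transpose T ** T) ** transpose T"

definition inner_T :: "real^'n^'l \<Rightarrow> real^'n \<Rightarrow> real^'n \<Rightarrow> real" where
  "inner_T T x y = x \<bullet> ((transpose T ** T) *v y)"

definition norm_T :: "real^'n^'l \<Rightarrow> real^'n \<Rightarrow> real" where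
  "norm_T T x = norm (T *v x)"

definition proper_fun :: "('a \<Rightarrow> ereal) \<Rightarrow> bool" where
  "proper_fun f \<longleftrightarrow> (\<forall>x. f x \<noteq> -\<infinity>) \<and> (\<exists>x. f x \<noteq> \<infinity>)"

definition lsc_fun :: "('a::topological_space \<Rightarrow> ereal) \<Rightarrow> bool" where
  "lsc_fun f \<longleftrightarrow> (\<forall>c::real. closed {x. f x \<le> ereal c})"

definition convex_fun :: "('a::real_vector \<Rightarrow> ereal) \<Rightarrow> bool" where
  "convex_fun f \<longleftrightarrow> convex {(x, c::real). f x \<le> ereal c}"

end

theory Submission
  imports Defs
begin

text \<open>
  Let \<open>\<Phi>(x)\<close> be the infimum of \<open>1/2 \<parallel>w\<parallel>\<^sup>2 + \<gamma> \<parallel>Tx + w\<parallel>\<^sub>1\<close> over \<open>w \<in> ker T\<^sup>*\<close>;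
  it is convex as the marginal of a jointly convex function, and real-valued, hence continuous.
  Since \<open>range T \<bottom> ker T\<^sup>*\<close>, every \<open>u = Tx + w\<close> satisfies
  \<open>\<parallel>Tz - u\<parallel>\<^sup>2 = \<parallel>z - x\<parallel>\<^sub>T\<^sup>2 + \<parallel>w\<parallel>\<^sup>2\<close>.  Soft shrinkage \<open>s = S\<^sub>\<gamma>(Tz)\<close> minimises the
  1-strongly convex function \<open>u \<mapsto> 1/2 \<parallel>Tz - u\<parallel>\<^sup>2 + \<gamma> \<parallel>u\<parallel>\<^sub>1\<close>, and it splits as
  \<open>s = Tp + w\<^sub>s\<close> with \<open>p = T\<^sup>\<dagger>s\<close> and \<open>w\<^sub>s \<in> ker T\<^sup>*\<close>.  Reading the strong convexity
  inequality through this orthogonal splitting gives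
  \<open>1/2 \<parallel>z - p\<parallel>\<^sub>T\<^sup>2 + \<Phi>(p) + 1/2 \<parallel>x - p\<parallel>\<^sub>T\<^sup>2 \<le> 1/2 \<parallel>z - x\<parallel>\<^sub>T\<^sup>2 + \<Phi>(x)\<close>,
  so \<open>p\<close> is the unique minimiser.
\<close>

lemma matrix_inv_right:
  fixes A :: "'a::semiring_1^'n^'n"
  assumes "invertible A"
  shows "A ** matrix_inv A = mat 1"
  using assms unfolding invertible_def matrix_inv_def by (rule someI2_ex) blast

lemma inner_matrix_vector_mult_transpose:
  fixes T :: "real^'n^'l"
  shows "(T *v v) \<bullet> w = v \<bullet> (transpose T *v w)"
  by (metis dot_lmul_matrix vector_transpose_matrix)

lemma full_rank_matrix_vector_eq_0_iff:
  fixes T :: "real^'n^'l"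
  assumes "rank T = CARD('n)"
  shows "T *v v = 0 \<longleftrightarrow> v = 0"
  using assms matrix_nonfull_linear_equations_eq by auto

lemma invertible_transpose_mult_self:
  fixes T :: "real^'n^'l"
  assumes "rank T = CARD('n)"
  shows "invertible (transpose T ** T)"
proof -
  have "v = 0" if "(transpose T ** T) *v v = 0" for v
  proof -
    have "(T *v v) \<bullet> (T *v v) = 0"
      using that by (simp add: inner_matrix_vector_mult_transpose matrix_vector_mul_assoc)
    then show "v = 0"
      using assms by (simp add: full_rank_matrix_vector_eq_0_iff)
  qed
  then show ?thesis
    by (simp add: invertible_left_inverse matrix_left_invertible_ker)
qed

lemma transpose_mult_pinv_residual:
  fixes T :: "real^'n^'l"
  assumes "rank T = CARD('n)"
  shows "transpose T *v (u - T *v (pinv T *v u)) = 0"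
proof -
  let ?G = "transpose T ** T"
  have G_inv: "?G *v (matrix_inv ?G *v v) = v" for v
    by (simp add: matrix_vector_mul_assoc matrix_inv_right invertible_transpose_mult_self assms)
  have "transpose T *v (T *v (pinv T *v u)) = ?G *v (matrix_inv ?G *v (transpose T *v u))"
    unfolding pinv_def by (simp only: matrix_vector_mul_assoc matrix_mul_assoc)
  also have "\<dots> = transpose T *v u"
    by (rule G_inv)
  finally show ?thesis
    by (simp add: matrix_vector_mult_diff_distrib)
qed

lemma norm_matrix_vector_diff_kernel_transpose:
  fixes T :: "real^'n^'l"
  assumes "transpose T *v w = 0"
  shows "(norm (T *v v - w))\<^sup>2 = (norm (T *v v))\<^sup>2 + (norm w)\<^sup>2"
proof -
  have "orthogonal (T *v v) w"
    using assms by (simp add: orthogonal_def inner_matrix_vector_mult_transpose)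
  then show ?thesis
    using norm_add_Pythagorean[of "T *v v" "- w"] by (simp add: orthogonal_clauses)
qed

lemma power2_norm_vec: "(norm (v :: real^'l))\<^sup>2 = (\<Sum>j\<in>UNIV. (v $ j)\<^sup>2)"
  unfolding power2_norm_eq_inner inner_vec_def by (simp add: power2_eq_square)

definition l1_norm :: "real^'l \<Rightarrow> real" where
  "l1_norm u = (\<Sum>j\<in>UNIV. \<bar>u $ j\<bar>)"

lemma l1_norm_nonneg: "0 \<le> l1_norm u"
  unfolding l1_norm_def by (simp add: sum_nonneg)

lemma convex_on_l1_norm: "convex_on UNIV l1_norm"
proof (rule convex_onI)
  fix t :: real and x y :: "real^'l"
  assume t: "0 < t" "t < 1"
  have "\<bar>(1 - t) * x$j + t * y$j\<bar> \<le> (1 - t) * \<bar>x$j\<bar> + t * \<bar>y$j\<bar>" for j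
    using t abs_triangle_ineq[of "(1 - t) * x$j" "t * y$j"] by (simp add: abs_mult)
  then have "(\<Sum>j\<in>UNIV. \<bar>(1 - t) * x$j + t * y$j\<bar>) \<le> (\<Sum>j\<in>UNIV. (1 - t) * \<bar>x$j\<bar> + t * \<bar>y$j\<bar>)"
    by (rule sum_mono)
  then show "l1_norm ((1 - t) *\<^sub>R x + t *\<^sub>R y) \<le> (1 - t) * l1_norm x + t * l1_norm y"
    by (simp add: l1_norm_def sum.distrib sum_distrib_left)
qed simp

lemma soft_threshold_three_point:
  fixes a u \<gamma> :: real
  assumes "\<gamma> > 0"
  defines "s \<equiv> if a \<ge> \<gamma> then a - \<gamma> else if a \<le> - \<gamma> then a + \<gamma> else 0"
  shows "1/2 * (a - s)\<^sup>2 + \<gamma> * \<bar>s\<bar> + 1/2 * (u - s)\<^sup>2 \<le> 1/2 * (a - u)\<^sup>2 + \<gamma> * \<bar>u\<bar>"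
proof -
  consider "a \<ge> \<gamma>" | "a \<le> -\<gamma>" | "\<bar>a\<bar> < \<gamma>"
    using assms by linarith
  then show ?thesis
  proof cases
    case 1
    then have "1/2 * (a - u)\<^sup>2 + \<gamma> * \<bar>u\<bar> - (1/2 * (a - s)\<^sup>2 + \<gamma> * \<bar>s\<bar> + 1/2 * (u - s)\<^sup>2)
        = \<gamma> * (\<bar>u\<bar> - u)"
      using assms by (simp add: power2_eq_square algebra_simps)
    moreover have "\<gamma> * (\<bar>u\<bar> - u) \<ge> 0"
      using assms by simp
    ultimately show ?thesis
      by linarith
  next
    case 2
    then have "1/2 * (a - u)\<^sup>2 + \<gamma> * \<bar>u\<bar> - (1/2 * (a - s)\<^sup>2 + \<gamma> * \<bar>s\<bar> + 1/2 * (u - s)\<^sup>2)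
        = \<gamma> * (\<bar>u\<bar> + u)"
      using assms by (simp add: power2_eq_square algebra_simps)
    moreover have "\<gamma> * (\<bar>u\<bar> + u) \<ge> 0"
      using assms by simp
    ultimately show ?thesis
      by linarith
  next
    case 3
    then have "s = 0"
      by (simp add: s_def abs_less_iff)
    then have "1/2 * (a - u)\<^sup>2 + \<gamma> * \<bar>u\<bar> - (1/2 * (a - s)\<^sup>2 + \<gamma> * \<bar>s\<bar> + 1/2 * (u - s)\<^sup>2)
        = \<gamma> * \<bar>u\<bar> - a * u"
      by (simp add: power2_eq_square algebra_simps)
    moreover have "a * u \<le> \<gamma> * \<bar>u\<bar>"
    proof -
      have "a * u \<le> \<bar>a\<bar> * \<bar>u\<bar>"
        by (metis abs_ge_self abs_mult)
      also have "\<dots> \<le> \<gamma> * \<bar>u\<bar>"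
        using 3 by (simp add: mult_right_mono)
      finally show ?thesis .
    qed
    ultimately show ?thesis
      by linarith
  qed
qed

lemma soft_shrink_three_point:
  fixes a u :: "real^'l"
  assumes "\<gamma> > 0"
  defines "s \<equiv> soft_shrink \<gamma> a"
  shows "1/2 * (norm (a - s))\<^sup>2 + \<gamma> * l1_norm s + 1/2 * (norm (u - s))\<^sup>2
    \<le> 1/2 * (norm (a - u))\<^sup>2 + \<gamma> * l1_norm u"
proof -
  have "(\<Sum>j\<in>UNIV. 1/2 * (a$j - s$j)\<^sup>2 + \<gamma> * \<bar>s$j\<bar> + 1/2 * (u$j - s$j)\<^sup>2)
     \<le> (\<Sum>j\<in>UNIV. 1/2 * (a$j - u$j)\<^sup>2 + \<gamma> * \<bar>u$j\<bar>)"
    by (rule sum_mono) (use soft_threshold_three_point[OF assms(1)] in \<open>simp add: s_def soft_shrink_def\<close>)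
  then show ?thesis
    by (simp add: l1_norm_def power2_norm_vec sum.distrib sum_distrib_left)
qed

lemma le_cInf_affine:
  fixes X :: "real set"
  assumes "X \<noteq> {}" "a > 0" "\<And>x. x \<in> X \<Longrightarrow> b \<le> a * x + c"
  shows "b \<le> a * Inf X + c"
proof -
  have "(b - c) / a \<le> Inf X"
    using assms by (intro cInf_greatest) (auto simp: field_simps)
  then show ?thesis
    using assms(2) by (simp add: field_simps)
qed

lemma convex_on_Inf_marginal:
  fixes g :: "'a::real_vector \<times> 'b::real_vector \<Rightarrow> real"
  assumes g: "convex_on UNIV g" and K: "convex K" "K \<noteq> {}"
    and bounded: "\<And>x w. w \<in> K \<Longrightarrow> c \<le> g (x, w)"
  shows "convex_on UNIV (\<lambda>x. Inf ((\<lambda>w. g (x, w)) ` K))"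
proof (rule convex_onI)
  fix t :: real and x y :: 'a
  assume t: "0 < t" "t < 1"
  define \<Phi> where "\<Phi> a = Inf ((\<lambda>w. g (a, w)) ` K)" for a
  let ?m = "(1 - t) *\<^sub>R x + t *\<^sub>R y"
  have mixed: "\<Phi> ?m \<le> (1 - t) * g (x, v) + t * g (y, w)" if "v \<in> K" "w \<in> K" for v w
  proof -
    have "(1 - t) *\<^sub>R v + t *\<^sub>R w \<in> K"
      using K that t by (intro convexD) auto
    then have "\<Phi> ?m \<le> g ((1 - t) *\<^sub>R (x, v) + t *\<^sub>R (y, w))"
      unfolding \<Phi>_def using bounded by (auto intro!: cInf_lower bdd_belowI2)
    also have "\<dots> \<le> (1 - t) * g (x, v) + t * g (y, w)"
      using convex_onD[OF g, of t "(x, v)" "(y, w)"] t by simp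
    finally show ?thesis .
  qed
  have "\<Phi> ?m \<le> (1 - t) * \<Phi> x + t * g (y, w)" if "w \<in> K" for w
    unfolding \<Phi>_def[of x] using K t mixed[OF _ that] by (intro le_cInf_affine) auto
  then have "\<Phi> ?m \<le> t * \<Phi> y + (1 - t) * \<Phi> x"
    unfolding \<Phi>_def[of y] using K t by (intro le_cInf_affine) (auto simp: add.commute)
  then show "\<Phi> ?m \<le> (1 - t) * \<Phi> x + t * \<Phi> y"
    by simp
qed simp

lemma convex_on_compose_linear:
  assumes "convex_on UNIV f" "linear h"
  shows "convex_on UNIV (\<lambda>x. f (h x))"
  using assms by (intro convex_onI) (auto simp: linear_add linear_scale intro: convex_onD)

lemma convex_on_power2_norm: "convex_on UNIV (\<lambda>x::'a::real_normed_vector. (norm x)\<^sup>2)"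
proof (rule convex_onI)
  fix t :: real and x y :: 'a
  assume t: "0 < t" "t < 1"
  have "norm ((1 - t) *\<^sub>R x + t *\<^sub>R y) \<le> (1 - t) * norm x + t * norm y"
    using t by (metis abs_of_pos diff_gt_0_iff_gt norm_scaleR norm_triangle_ineq)
  then have "(norm ((1 - t) *\<^sub>R x + t *\<^sub>R y))\<^sup>2 \<le> ((1 - t) * norm x + t * norm y)\<^sup>2"
    by (simp add: power_mono)
  also have "\<dots> \<le> (1 - t) * (norm x)\<^sup>2 + t * (norm y)\<^sup>2"
    using convex_onD[OF convex_power2, of t "norm x" "norm y"] t by simp
  finally show "(norm ((1 - t) *\<^sub>R x + t *\<^sub>R y))\<^sup>2 \<le> (1 - t) * (norm x)\<^sup>2 + t * (norm y)\<^sup>2" .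
qed simp

definition shrinkage_penalty :: "real^'n^'l \<Rightarrow> real \<Rightarrow> real^'n \<Rightarrow> real" where
  "shrinkage_penalty T \<gamma> x =
     Inf ((\<lambda>w. 1/2 * (norm w)\<^sup>2 + \<gamma> * l1_norm (T *v x + w)) ` {w. transpose T *v w = 0})"

lemma shrinkage_penalty_le:
  assumes "\<gamma> \<ge> 0" "transpose T *v w = 0"
  shows "shrinkage_penalty T \<gamma> x \<le> 1/2 * (norm w)\<^sup>2 + \<gamma> * l1_norm (T *v x + w)"
  unfolding shrinkage_penalty_def using assms
  by (intro cInf_lower bdd_belowI2[where m = 0]) (auto intro!: add_nonneg_nonneg mult_nonneg_nonneg l1_norm_nonneg)

lemma shrinkage_penalty_greatest:
  assumes "\<And>w. transpose T *v w = 0 \<Longrightarrow> c \<le> 1/2 * (norm w)\<^sup>2 + \<gamma> * l1_norm (T *v x + w)"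
  shows "c \<le> shrinkage_penalty T \<gamma> x"
  unfolding shrinkage_penalty_def using assms
  by (intro cInf_greatest) (auto intro!: exI[of _ 0])

lemma convex_on_shrinkage_penalty:
  fixes T :: "real^'n^'l"
  assumes "\<gamma> \<ge> 0"
  shows "convex_on UNIV (shrinkage_penalty T \<gamma>)"
proof -
  let ?g = "\<lambda>p. 1/2 * (norm (snd p))\<^sup>2 + \<gamma> * l1_norm (T *v fst p + snd p)"
  have "linear (\<lambda>p. T *v fst p + snd p)"
    by (intro linearI) (auto simp: matrix_vector_right_distrib matrix_vector_mult_scaleR scaleR_right_distrib)
  then have "convex_on UNIV (\<lambda>p. \<gamma> * l1_norm (T *v fst p + snd p))"
    using assms by (intro convex_on_cmul convex_on_compose_linear[OF convex_on_l1_norm])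
  then have "convex_on UNIV ?g"
    using convex_on_compose_linear[OF convex_on_power2_norm linear_snd]
    by (intro convex_on_add[OF convex_on_cmul]) simp_all
  moreover have "convex {w :: real^'l. transpose T *v w = 0}"
    by (auto simp: convex_def vector_matrix_left_distrib scaleR_vector_matrix_assoc)
  ultimately have "convex_on UNIV (\<lambda>x. Inf ((\<lambda>w. ?g (x, w)) ` {w. transpose T *v w = 0}))"
    using assms by (intro convex_on_Inf_marginal[where c = 0])
      (auto intro!: exI[of _ 0] add_nonneg_nonneg mult_nonneg_nonneg l1_norm_nonneg)
  then show ?thesis
    by (simp add: shrinkage_penalty_def[abs_def])
qed

lemma pinv_soft_shrink_quadratic_growth:
  fixes T :: "real^'n^'l" and z x :: "real^'n"
  assumes rank: "rank T = CARD('n)" and "\<gamma> > 0"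
  defines "p \<equiv> pinv T *v soft_shrink \<gamma> (T *v z)"
  shows "1/2 * (norm_T T (z - p))\<^sup>2 + shrinkage_penalty T \<gamma> p + 1/2 * (norm_T T (x - p))\<^sup>2
    \<le> 1/2 * (norm_T T (z - x))\<^sup>2 + shrinkage_penalty T \<gamma> x"
proof -
  define s where "s = soft_shrink \<gamma> (T *v z)"
  define w\<^sub>s where "w\<^sub>s = s - T *v p"
  define F where "F = 1/2 * (norm (T *v z - s))\<^sup>2 + \<gamma> * l1_norm s"
  have w\<^sub>s: "transpose T *v w\<^sub>s = 0"
    using transpose_mult_pinv_residual[OF rank] by (simp add: w\<^sub>s_def p_def s_def)
  have at_p: "1/2 * (norm (T *v (z - p)))\<^sup>2 + shrinkage_penalty T \<gamma> p \<le> F"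
  proof -
    have "shrinkage_penalty T \<gamma> p \<le> 1/2 * (norm w\<^sub>s)\<^sup>2 + \<gamma> * l1_norm s"
      using shrinkage_penalty_le[OF _ w\<^sub>s, of \<gamma> p] assms(2) by (simp add: w\<^sub>s_def)
    moreover have "T *v z - s = T *v (z - p) - w\<^sub>s"
      by (simp add: w\<^sub>s_def matrix_vector_mult_diff_distrib)
    then have "(norm (T *v z - s))\<^sup>2 = (norm (T *v (z - p)))\<^sup>2 + (norm w\<^sub>s)\<^sup>2"
      using norm_matrix_vector_diff_kernel_transpose[OF w\<^sub>s] by (simp only:)
    ultimately show ?thesis
      unfolding F_def by linarith
  qed
  have "F + 1/2 * (norm (T *v (x - p)))\<^sup>2 - 1/2 * (norm (T *v (z - x)))\<^sup>2 \<le> shrinkage_penalty T \<gamma> x"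
  proof (rule shrinkage_penalty_greatest)
    fix w :: "real^'l"
    assume w: "transpose T *v w = 0"
    let ?u = "T *v x + w"
    have "F + 1/2 * (norm (?u - s))\<^sup>2 \<le> 1/2 * (norm (T *v z - ?u))\<^sup>2 + \<gamma> * l1_norm ?u"
      using soft_shrink_three_point[OF assms(2), of "T *v z" ?u] by (simp add: F_def s_def)
    moreover have "T *v z - ?u = T *v (z - x) - w"
      by (simp add: matrix_vector_mult_diff_distrib)
    then have "(norm (T *v z - ?u))\<^sup>2 = (norm (T *v (z - x)))\<^sup>2 + (norm w)\<^sup>2"
      using norm_matrix_vector_diff_kernel_transpose[OF w] by (simp only:)
    moreover have "(norm (?u - s))\<^sup>2 \<ge> (norm (T *v (x - p)))\<^sup>2"
    proof -
      have kernel: "transpose T *v (w\<^sub>s - w) = 0"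
        using w w\<^sub>s by (simp add: matrix_vector_mult_diff_distrib)
      have "?u - s = T *v (x - p) - (w\<^sub>s - w)"
        by (simp add: w\<^sub>s_def matrix_vector_mult_diff_distrib)
      then have "(norm (?u - s))\<^sup>2 = (norm (T *v (x - p)))\<^sup>2 + (norm (w\<^sub>s - w))\<^sup>2"
        using norm_matrix_vector_diff_kernel_transpose[OF kernel] by (simp only:)
      then show ?thesis
        by simp
    qed
    ultimately show "F + 1/2 * (norm (T *v (x - p)))\<^sup>2 - 1/2 * (norm (T *v (z - x)))\<^sup>2
        \<le> 1/2 * (norm w)\<^sup>2 + \<gamma> * l1_norm ?u"
      by linarith
  qed
  with at_p show ?thesis
    by (simp add: norm_T_def)
qed

lemma proper_fun_ereal: "proper_fun (\<lambda>x. ereal (f x))"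
  by (simp add: proper_fun_def)

lemma lsc_fun_ereal:
  assumes "continuous_on UNIV f"
  shows "lsc_fun (\<lambda>x. ereal (f x))"
  unfolding lsc_fun_def using assms by (auto intro!: closed_Collect_le continuous_on_const)

lemma convex_fun_ereal_iff: "convex_fun (\<lambda>x. ereal (f x)) \<longleftrightarrow> convex_on UNIV f"
proof -
  have "{(x, c). ereal (f x) \<le> ereal c} = epigraph UNIV f"
    by (auto simp: epigraph_def)
  then show ?thesis
    by (simp add: convex_fun_def convex_epigraph)
qed

lemma argmin_eq_singletonI:
  fixes f q :: "'a \<Rightarrow> real"
  assumes "\<And>x. f p + q x \<le> f x" "\<And>x. 0 \<le> q x" "\<And>x. q x = 0 \<Longrightarrow> x = p"
  shows "{x. \<forall>y. f x \<le> f y} = {p}"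
proof -
  have "x = p" if "f x \<le> f p" for x
    using assms(1)[of x] assms(2)[of x] assms(3)[of x] that by linarith
  moreover have "f p \<le> f y" for y
    using assms(1)[of y] assms(2)[of y] by linarith
  ultimately show ?thesis
    by blast
qed

theorem theorem3p5:
  fixes T :: "real^'n^'l" and \<gamma> :: real
  assumes "CARD('n) \<le> CARD('l)"
    and "rank T = CARD('n)"
    and "\<gamma> > 0"
  shows "\<exists>\<Phi> :: real^'n \<Rightarrow> ereal. proper_fun \<Phi> \<and> lsc_fun \<Phi> \<and> convex_fun \<Phi> \<and>
    (\<forall>z :: real^'n.
       {x. \<forall>y. ereal (1/2 * (norm_T T (z - x))\<^sup>2) + \<Phi> x
                 \<le> ereal (1/2 * (norm_T T (z - y))\<^sup>2) + \<Phi> y}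
       = {pinv T *v soft_shrink \<gamma> (T *v z)})"
proof (intro exI[of _ "\<lambda>x. ereal (shrinkage_penalty T \<gamma> x)"] conjI allI)
  \<comment> \<open>\<open>CARD('n) \<le> CARD('l)\<close> is implied by the rank hypothesis and not needed.\<close>
  have convex: "convex_on UNIV (shrinkage_penalty T \<gamma>)"
    using assms(3) by (simp add: convex_on_shrinkage_penalty)
  show "proper_fun (\<lambda>x. ereal (shrinkage_penalty T \<gamma> x))"
    by (rule proper_fun_ereal)
  show "lsc_fun (\<lambda>x. ereal (shrinkage_penalty T \<gamma> x))"
    by (rule lsc_fun_ereal[OF convex_on_continuous[OF open_UNIV convex]])
  show "convex_fun (\<lambda>x. ereal (shrinkage_penalty T \<gamma> x))"
    using convex by (simp add: convex_fun_ereal_iff)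
  fix z :: "real^'n"
  have "{x. \<forall>y. 1/2 * (norm_T T (z - x))\<^sup>2 + shrinkage_penalty T \<gamma> x
                \<le> 1/2 * (norm_T T (z - y))\<^sup>2 + shrinkage_penalty T \<gamma> y}
      = {pinv T *v soft_shrink \<gamma> (T *v z)}"
    using pinv_soft_shrink_quadratic_growth[OF assms(2,3)]
    by (rule argmin_eq_singletonI)
      (simp_all add: norm_T_def full_rank_matrix_vector_eq_0_iff[OF assms(2)])
  then show "{x. \<forall>y. ereal (1/2 * (norm_T T (z - x))\<^sup>2) + ereal (shrinkage_penalty T \<gamma> x)
                 \<le> ereal (1/2 * (norm_T T (z - y))\<^sup>2) + ereal (shrinkage_penalty T \<gamma> y)}
      = {pinv T *v soft_shrink \<gamma> (T *v z)}"
    by simp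
qed

end
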